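(* Let $\mathcal V$ be a $*$-vector space with a (not necessarily proper) matrix ordering $\{C_n\}_n$. For each $n$ let $J_n=\operatorname{span}(C_n\cap-C_n)\subseteq M_n(\mathcal V)$ and let $J=J_1$. Then $M_n(J)=J_n$ for every $n\in\mathbb N$.
   Context: A (not necessarily proper) matrix ordering is a sequence of cones $C_n\subseteq M_n(\mathcal V)_h$ (hermitian elements) with $\alpha^*C_n\alpha\subseteq C_m$ for all $\alpha\in M_{n,m}$ and all $n,m$. *)

theory Defs
  imports Complex_Main
begin

definition star_vector_space :: "(complex \<Rightarrow> 'v::ab_group_add \<Rightarrow> 'v) \<Rightarrow> ('v \<Rightarrow> 'v) \<Rightarrow> bool" where
  "star_vector_space sc st \<longleftrightarrow> vector_space sc
     \<and> (\<forall>x. st (st x) = x)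
     \<and> (\<forall>x y. st (x + y) = st x + st y)
     \<and> (\<forall>c x. st (sc c x) = sc (cnj c) (st x))"

definition Mn :: "nat \<Rightarrow> (nat \<Rightarrow> nat \<Rightarrow> 'v::zero) set" where
  "Mn n = {A. \<forall>i j. (n \<le> i \<or> n \<le> j) \<longrightarrow> A i j = 0}"

definition Mn_of :: "nat \<Rightarrow> 'v::zero set \<Rightarrow> (nat \<Rightarrow> nat \<Rightarrow> 'v) set" where
  "Mn_of n S = {A \<in> Mn n. \<forall>i<n. \<forall>j<n. A i j \<in> S}"

definition mat_star :: "('v \<Rightarrow> 'v) \<Rightarrow> (nat \<Rightarrow> nat \<Rightarrow> 'v) \<Rightarrow> (nat \<Rightarrow> nat \<Rightarrow> 'v)" where
  "mat_star st A = (\<lambda>i j. st (A j i))"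

definition hermitian_mats :: "('v::zero \<Rightarrow> 'v) \<Rightarrow> nat \<Rightarrow> (nat \<Rightarrow> nat \<Rightarrow> 'v) set" where
  "hermitian_mats st n = {A \<in> Mn n. mat_star st A = A}"

definition mat_scale :: "(complex \<Rightarrow> 'v \<Rightarrow> 'v) \<Rightarrow> complex \<Rightarrow> (nat \<Rightarrow> nat \<Rightarrow> 'v) \<Rightarrow> (nat \<Rightarrow> nat \<Rightarrow> 'v)" where
  "mat_scale sc c A = (\<lambda>i j. sc c (A i j))"

definition mat_add :: "(nat \<Rightarrow> nat \<Rightarrow> 'v::plus) \<Rightarrow> (nat \<Rightarrow> nat \<Rightarrow> 'v) \<Rightarrow> (nat \<Rightarrow> nat \<Rightarrow> 'v)" where
  "mat_add A B = (\<lambda>i j. A i j + B i j)"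

text \<open>alpha^* X alpha for X in M_n(V) and a complex n x m matrix alpha (entries alpha i k, i<n, k<m).\<close>
definition conj_mult :: "(complex \<Rightarrow> 'v::comm_monoid_add \<Rightarrow> 'v) \<Rightarrow> nat \<Rightarrow> nat \<Rightarrow> (nat \<Rightarrow> nat \<Rightarrow> complex)
     \<Rightarrow> (nat \<Rightarrow> nat \<Rightarrow> 'v) \<Rightarrow> (nat \<Rightarrow> nat \<Rightarrow> 'v)" where
  "conj_mult sc n m \<alpha> X = (\<lambda>k l. if k < m \<and> l < m
       then (\<Sum>i<n. \<Sum>j<n. sc (cnj (\<alpha> i k) * \<alpha> j l) (X i j)) else 0)"

definition mat_cone :: "(complex \<Rightarrow> 'v::{zero,plus} \<Rightarrow> 'v) \<Rightarrow> (nat \<Rightarrow> nat \<Rightarrow> 'v) set \<Rightarrow> bool" where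
  "mat_cone sc K \<longleftrightarrow> (\<lambda>i j. 0) \<in> K
     \<and> (\<forall>A\<in>K. \<forall>B\<in>K. mat_add A B \<in> K)
     \<and> (\<forall>A\<in>K. \<forall>t::real. t \<ge> 0 \<longrightarrow> mat_scale sc (complex_of_real t) A \<in> K)"

definition matrix_ordering :: "(complex \<Rightarrow> 'v::comm_monoid_add \<Rightarrow> 'v) \<Rightarrow> ('v \<Rightarrow> 'v)
     \<Rightarrow> (nat \<Rightarrow> (nat \<Rightarrow> nat \<Rightarrow> 'v) set) \<Rightarrow> bool" where
  "matrix_ordering sc st C \<longleftrightarrow>
     (\<forall>n\<ge>1. mat_cone sc (C n) \<and> C n \<subseteq> hermitian_mats st n)
     \<and> (\<forall>n\<ge>1. \<forall>m\<ge>1. \<forall>\<alpha> X. X \<in> C n \<longrightarrow> conj_mult sc n m \<alpha> X \<in> C m)"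

definition mat_span :: "(complex \<Rightarrow> 'v::comm_monoid_add \<Rightarrow> 'v) \<Rightarrow> (nat \<Rightarrow> nat \<Rightarrow> 'v) set
     \<Rightarrow> (nat \<Rightarrow> nat \<Rightarrow> 'v) set" where
  "mat_span sc S = {X. \<exists>F c. finite F \<and> F \<subseteq> S \<and> X = (\<lambda>i j. \<Sum>A\<in>F. sc (c A) (A i j))}"

definition mat_neg :: "(nat \<Rightarrow> nat \<Rightarrow> 'v::uminus) \<Rightarrow> (nat \<Rightarrow> nat \<Rightarrow> 'v)" where
  "mat_neg A = (\<lambda>i j. - A i j)"

definition Jn :: "(complex \<Rightarrow> 'v::ab_group_add \<Rightarrow> 'v) \<Rightarrow> (nat \<Rightarrow> (nat \<Rightarrow> nat \<Rightarrow> 'v) set) \<Rightarrow> nat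
     \<Rightarrow> (nat \<Rightarrow> nat \<Rightarrow> 'v) set" where
  "Jn sc C n = mat_span sc (C n \<inter> mat_neg ` C n)"

definition J1 :: "(complex \<Rightarrow> 'v::ab_group_add \<Rightarrow> 'v) \<Rightarrow> (nat \<Rightarrow> (nat \<Rightarrow> nat \<Rightarrow> 'v) set) \<Rightarrow> 'v set" where
  "J1 sc C = (\<lambda>A. A 0 0) ` Jn sc C 1"

end

theory Submission imports Defs begin

text \<open>Polarization: the matrix unit \<open>E\<^sub>p\<^sub>q\<close> is the combination
  \<open>\<Sum>k<4. cnj (\<i>^k)/4 \<cdot> u\<^sub>k u\<^sub>k\<^sup>*\<close> of rank-one matrices, where
  \<open>u\<^sub>k = e\<^sub>p + \<i>^k e\<^sub>q\<close> (also when p = q). Compressing an element of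
  \<open>J\<^sub>n\<close> by the columns \<open>u\<^sub>k\<close> therefore yields its (p,q) entry as a combination of
  elements of \<open>J\<^sub>1\<close>; conversely, compressing an element v of \<open>J\<^sub>1\<close> by the rows \<open>u\<^sub>k\<close>
  yields \<open>E\<^sub>p\<^sub>q \<otimes> v\<close> as a combination of elements of \<open>J\<^sub>n\<close>. Both uses rest on the
  fact that compressions map \<open>C\<^sub>n \<inter> -C\<^sub>n\<close> into \<open>C\<^sub>m \<inter> -C\<^sub>m\<close> and hence, being linear,
  \<open>J\<^sub>n\<close> into \<open>J\<^sub>m\<close>.\<close>

definition polar_vec :: "nat \<Rightarrow> nat \<Rightarrow> nat \<Rightarrow> nat \<Rightarrow> complex" where
  "polar_vec p q k i = of_bool (i = p) + \<i> ^ k * of_bool (i = q)"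

lemma polarization:
  "(\<Sum>k<4. cnj (\<i> ^ k) / 4 * (cnj (polar_vec p q k i) * polar_vec p q k j))
     = of_bool (i = p \<and> j = q)"
  unfolding polar_vec_def
  by (cases "i = p"; cases "i = q"; cases "j = p"; cases "j = q")
     (simp_all add: eval_nat_numeral field_simps)

definition single_entry :: "nat \<Rightarrow> nat \<Rightarrow> 'v::zero \<Rightarrow> nat \<Rightarrow> nat \<Rightarrow> 'v" where
  "single_entry p q x = (\<lambda>i j. if i = p \<and> j = q then x else 0)"

lemma sum_sum_delta:
  fixes f :: "nat \<Rightarrow> nat \<Rightarrow> 'a::comm_monoid_add"
  shows "(\<Sum>p<n. \<Sum>q<n. if i = p \<and> j = q then f p q else 0)
     = (if i < n \<and> j < n then f i j else 0)"
proof -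
  have "(\<Sum>p<n. \<Sum>q<n. if i = p \<and> j = q then f p q else 0)
      = (\<Sum>p<n. if i = p then \<Sum>q<n. if j = q then f p q else 0 else 0)"
    by (intro sum.cong) auto
  then show ?thesis by simp
qed

lemma Mn_sum_single_entry:
  fixes X :: "nat \<Rightarrow> nat \<Rightarrow> 'v::comm_monoid_add"
  assumes "X \<in> Mn n"
  shows "X = (\<lambda>i j. \<Sum>p<n. \<Sum>q<n. single_entry p q (X p q) i j)"
  using assms by (intro ext) (auto simp: Mn_def single_entry_def sum_sum_delta)

context
  fixes sc :: "complex \<Rightarrow> 'v::ab_group_add \<Rightarrow> 'v"
  assumes vs: "vector_space sc"
begin

interpretation V: vector_space sc by (rule vs)

lemma mat_span_zero: "(\<lambda>i j. 0) \<in> mat_span sc S"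
  unfolding mat_span_def by (intro CollectI exI[of _ "{}"]) auto

lemma mat_span_base: "A \<in> S \<Longrightarrow> A \<in> mat_span sc S"
  unfolding mat_span_def by (intro CollectI exI[of _ "{A}"] exI[of _ "\<lambda>_. 1"]) auto

lemma mat_span_scale:
  assumes "X \<in> mat_span sc S"
  shows "mat_scale sc d X \<in> mat_span sc S"
proof -
  obtain F c where F: "finite F" "F \<subseteq> S" "X = (\<lambda>i j. \<Sum>A\<in>F. sc (c A) (A i j))"
    using assms unfolding mat_span_def by blast
  have "mat_scale sc d X = (\<lambda>i j. \<Sum>A\<in>F. sc (d * c A) (A i j))"
    unfolding F(3) mat_scale_def by (simp add: V.scale_sum_right)
  with F show ?thesis
    unfolding mat_span_def by (intro CollectI exI[of _ F] exI[of _ "\<lambda>A. d * c A"]) simp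
qed

lemma mat_span_add:
  assumes "X \<in> mat_span sc S" "Y \<in> mat_span sc S"
  shows "mat_add X Y \<in> mat_span sc S"
proof -
  obtain F c G d where F: "finite F" "F \<subseteq> S" "X = (\<lambda>i j. \<Sum>A\<in>F. sc (c A) (A i j))"
    and G: "finite G" "G \<subseteq> S" "Y = (\<lambda>i j. \<Sum>A\<in>G. sc (d A) (A i j))"
    using assms unfolding mat_span_def by blast
  define e where "e A = (if A \<in> F then c A else 0) + (if A \<in> G then d A else 0)" for A
  have X: "(\<Sum>A\<in>F \<union> G. sc (if A \<in> F then c A else 0) (A i j)) = X i j" for i j
    unfolding F(3) by (rule sum.mono_neutral_cong_right) (use F G in auto)
  have Y: "(\<Sum>A\<in>F \<union> G. sc (if A \<in> G then d A else 0) (A i j)) = Y i j" for i j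
    unfolding G(3) by (rule sum.mono_neutral_cong_right) (use F G in auto)
  have "mat_add X Y = (\<lambda>i j. \<Sum>A\<in>F \<union> G. sc (e A) (A i j))"
    unfolding mat_add_def e_def by (simp add: V.scale_left_distrib sum.distrib X Y)
  with F G show ?thesis
    unfolding mat_span_def by (intro CollectI exI[of _ "F \<union> G"] exI[of _ e]) simp
qed

lemma mat_span_sum:
  assumes "finite K" "\<And>k. k \<in> K \<Longrightarrow> g k \<in> mat_span sc S"
  shows "(\<lambda>i j. \<Sum>k\<in>K. sc (c k) (g k i j)) \<in> mat_span sc S"
  using assms
proof (induction K rule: finite_induct)
  case empty
  then show ?case using mat_span_zero by simp
next
  case (insert a K)
  have "(\<lambda>i j. \<Sum>k\<in>insert a K. sc (c k) (g k i j)) =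
     mat_add (mat_scale sc (c a) (g a)) (\<lambda>i j. \<Sum>k\<in>K. sc (c k) (g k i j))"
    using insert by (simp add: mat_add_def mat_scale_def)
  then show ?case using insert mat_span_add mat_span_scale by simp
qed

lemma scale_sum_double_sum_swap:
  "(\<Sum>r\<in>R. sc (c r) (\<Sum>i<n. \<Sum>j<n. sc (w r i j) (X r i j)))
     = (\<Sum>i<n. \<Sum>j<n. \<Sum>r\<in>R. sc (c r * w r i j) (X r i j))"
proof -
  have "(\<Sum>r\<in>R. sc (c r) (\<Sum>i<n. \<Sum>j<n. sc (w r i j) (X r i j)))
      = (\<Sum>r\<in>R. \<Sum>i<n. \<Sum>j<n. sc (c r * w r i j) (X r i j))"
    by (simp add: V.scale_sum_right)
  also have "\<dots> = (\<Sum>i<n. \<Sum>r\<in>R. \<Sum>j<n. sc (c r * w r i j) (X r i j))"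
    by (rule sum.swap)
  also have "\<dots> = (\<Sum>i<n. \<Sum>j<n. \<Sum>r\<in>R. sc (c r * w r i j) (X r i j))"
    by (rule sum.cong[OF refl], rule sum.swap)
  finally show ?thesis .
qed

lemma conj_mult_sum:
  "conj_mult sc n m \<alpha> (\<lambda>i j. \<Sum>A\<in>F. sc (c A) (A i j))
     = (\<lambda>k l. \<Sum>A\<in>F. sc (c A) (conj_mult sc n m \<alpha> A k l))"
proof (intro ext)
  fix k l
  let ?w = "\<lambda>i j. cnj (\<alpha> i k) * \<alpha> j l"
  have "(\<Sum>i<n. \<Sum>j<n. sc (?w i j) (\<Sum>A\<in>F. sc (c A) (A i j)))
      = (\<Sum>i<n. \<Sum>j<n. \<Sum>A\<in>F. sc (c A * ?w i j) (A i j))"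
    by (simp add: V.scale_sum_right mult.commute)
  also have "\<dots> = (\<Sum>A\<in>F. sc (c A) (\<Sum>i<n. \<Sum>j<n. sc (?w i j) (A i j)))"
    by (rule scale_sum_double_sum_swap[symmetric])
  finally have "(\<Sum>i<n. \<Sum>j<n. sc (?w i j) (\<Sum>A\<in>F. sc (c A) (A i j)))
      = (\<Sum>A\<in>F. sc (c A) (\<Sum>i<n. \<Sum>j<n. sc (?w i j) (A i j)))" .
  then show "conj_mult sc n m \<alpha> (\<lambda>i j. \<Sum>A\<in>F. sc (c A) (A i j)) k l
      = (\<Sum>A\<in>F. sc (c A) (conj_mult sc n m \<alpha> A k l))"
    by (cases "k < m \<and> l < m") (auto simp: conj_mult_def)
qed

lemma sum_conj_mult_entry:
  assumes "k < m" "l < m"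
  shows "(\<Sum>r\<in>R. sc (c r) (conj_mult sc n m (\<alpha> r) X k l))
     = (\<Sum>i<n. \<Sum>j<n. sc (\<Sum>r\<in>R. c r * (cnj (\<alpha> r i k) * \<alpha> r j l)) (X i j))"
  using assms by (simp add: conj_mult_def scale_sum_double_sum_swap V.scale_sum_left)

lemma sum_delta_entry:
  fixes n :: nat
  assumes "p < n" "q < n"
  shows "(\<Sum>i<n. \<Sum>j<n. sc (of_bool (i = p \<and> j = q)) (X i j)) = X p q"
proof -
  have "sc (of_bool b) x = (if b then x else 0)" for b x
    by simp
  then show ?thesis
    using assms by (simp add: sum_sum_delta eq_commute[of _ p] eq_commute[of _ q])
qed

lemma conj_mult_mat_neg: "conj_mult sc n m \<alpha> (mat_neg X) = mat_neg (conj_mult sc n m \<alpha> X)"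
  unfolding conj_mult_def mat_neg_def by (intro ext) (simp add: sum_negf V.scale_minus_right)

lemma conj_mult_mat_span:
  assumes "\<And>A. A \<in> S \<Longrightarrow> conj_mult sc n m \<alpha> A \<in> T" and "X \<in> mat_span sc S"
  shows "conj_mult sc n m \<alpha> X \<in> mat_span sc T"
proof -
  obtain F c where F: "finite F" "F \<subseteq> S" "X = (\<lambda>i j. \<Sum>A\<in>F. sc (c A) (A i j))"
    using assms(2) unfolding mat_span_def by blast
  show ?thesis
    unfolding F(3) conj_mult_sum
    by (rule mat_span_sum[OF F(1)]) (use F(2) assms(1) mat_span_base in blast)
qed

end

context
  fixes sc :: "complex \<Rightarrow> 'v::ab_group_add \<Rightarrow> 'v" and C :: "nat \<Rightarrow> (nat \<Rightarrow> nat \<Rightarrow> 'v) set"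
  assumes vs: "vector_space sc"
    and C_subset_Mn: "\<And>n. n \<ge> 1 \<Longrightarrow> C n \<subseteq> Mn n"
    and conj_mult_C: "\<And>n m \<alpha> X. n \<ge> 1 \<Longrightarrow> m \<ge> 1 \<Longrightarrow> X \<in> C n \<Longrightarrow> conj_mult sc n m \<alpha> X \<in> C m"
begin

interpretation V: vector_space sc by (rule vs)

lemma Jn_sum:
  "finite K \<Longrightarrow> (\<And>k. k \<in> K \<Longrightarrow> g k \<in> Jn sc C n)
     \<Longrightarrow> (\<lambda>i j. \<Sum>k\<in>K. sc (c k) (g k i j)) \<in> Jn sc C n"
  unfolding Jn_def by (rule mat_span_sum[OF vs])

lemma conj_mult_Jn:
  assumes "n \<ge> 1" "m \<ge> 1" "X \<in> Jn sc C n"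
  shows "conj_mult sc n m \<alpha> X \<in> Jn sc C m"
  unfolding Jn_def
proof (rule conj_mult_mat_span[OF vs])
  fix A assume "A \<in> C n \<inter> mat_neg ` C n"
  then obtain B where A: "A \<in> C n" "A = mat_neg B" and B: "B \<in> C n"
    by blast
  have "conj_mult sc n m \<alpha> A = mat_neg (conj_mult sc n m \<alpha> B)"
    unfolding A(2) by (rule conj_mult_mat_neg[OF vs])
  with conj_mult_C[OF assms(1,2) A(1)] conj_mult_C[OF assms(1,2) B]
  show "conj_mult sc n m \<alpha> A \<in> C m \<inter> mat_neg ` C m"
    by blast
next
  show "X \<in> mat_span sc (C n \<inter> mat_neg ` C n)"
    using assms(3) unfolding Jn_def .
qed

lemma Jn_subset_Mn:
  assumes "n \<ge> 1"
  shows "Jn sc C n \<subseteq> Mn n"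
proof
  fix X assume "X \<in> Jn sc C n"
  then obtain F c where F: "F \<subseteq> C n" "X = (\<lambda>i j. \<Sum>A\<in>F. sc (c A) (A i j))"
    unfolding Jn_def mat_span_def by blast
  have outside: "A i j = 0" if "A \<in> F" "n \<le> i \<or> n \<le> j" for A i j
    using that F(1) C_subset_Mn[OF assms] unfolding Mn_def by blast
  then show "X \<in> Mn n"
    unfolding Mn_def F(2) by (auto intro!: sum.neutral simp: outside)
qed

lemma Jn_entry_in_J1:
  assumes "n \<ge> 1" "X \<in> Jn sc C n" "p < n" "q < n"
  shows "X p q \<in> J1 sc C"
proof -
  define \<gamma> where "\<gamma> k = conj_mult sc n 1 (\<lambda>i _. polar_vec p q k i) X" for k
  let ?Y = "\<lambda>i j. \<Sum>k<4. sc (cnj (\<i> ^ k) / 4) (\<gamma> k i j)"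
  have "?Y \<in> Jn sc C 1"
    by (rule Jn_sum) (use assms(1,2) conj_mult_Jn in \<open>simp_all add: \<gamma>_def\<close>)
  moreover have "?Y 0 0 = X p q"
    unfolding \<gamma>_def sum_conj_mult_entry[OF vs zero_less_one zero_less_one] polarization
    by (rule sum_delta_entry[OF vs assms(3,4)])
  ultimately show ?thesis
    unfolding J1_def by (intro image_eqI[of _ _ ?Y]) simp_all
qed

lemma single_entry_in_Jn:
  assumes "n \<ge> 1" "v \<in> J1 sc C" "p < n" "q < n"
  shows "single_entry p q v \<in> Jn sc C n"
proof -
  obtain B where B: "B \<in> Jn sc C 1" "v = B 0 0"
    using assms(2) unfolding J1_def by blast
  define \<gamma> where "\<gamma> k = conj_mult sc 1 n (\<lambda>_ j. polar_vec p q k j) B" for k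
  let ?Y = "\<lambda>i j. \<Sum>k<4. sc (cnj (\<i> ^ k) / 4) (\<gamma> k i j)"
  have "?Y \<in> Jn sc C n"
    by (rule Jn_sum) (use assms(1) B(1) conj_mult_Jn in \<open>simp_all add: \<gamma>_def\<close>)
  moreover have "?Y = single_entry p q v"
  proof (intro ext)
    fix i j
    show "?Y i j = single_entry p q v i j"
    proof (cases "i < n \<and> j < n")
      case True
      then have "i < n" "j < n" by simp_all
      then show ?thesis
        unfolding \<gamma>_def sum_conj_mult_entry[OF vs \<open>i < n\<close> \<open>j < n\<close>] polarization
        by (simp add: single_entry_def B(2))
    next
      case False
      then show ?thesis
        using assms(3,4) by (auto simp: \<gamma>_def conj_mult_def single_entry_def)
    qed
  qed
  ultimately show ?thesis
    by simp
qed

lemma Jn_subset_Mn_of_J1: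
  assumes "n \<ge> 1"
  shows "Jn sc C n \<subseteq> Mn_of n (J1 sc C)"
  using Jn_subset_Mn[OF assms] Jn_entry_in_J1[OF assms] unfolding Mn_of_def by blast

lemma Mn_of_J1_subset_Jn:
  assumes "n \<ge> 1"
  shows "Mn_of n (J1 sc C) \<subseteq> Jn sc C n"
proof
  fix X assume X: "X \<in> Mn_of n (J1 sc C)"
  then have "X = (\<lambda>i j. \<Sum>p<n. \<Sum>q<n. single_entry p q (X p q) i j)"
    unfolding Mn_of_def by (blast intro: Mn_sum_single_entry)
  also have "\<dots> = (\<lambda>i j. \<Sum>p<n. sc 1 (\<Sum>q<n. sc 1 (single_entry p q (X p q) i j)))"
    by simp
  also have "\<dots> \<in> Jn sc C n"
    using X assms by (intro Jn_sum single_entry_in_Jn) (auto simp: Mn_of_def)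
  finally show "X \<in> Jn sc C n" .
qed

end

theorem lemma4p2:
  fixes sc :: "complex \<Rightarrow> 'v::ab_group_add \<Rightarrow> 'v" and st :: "'v \<Rightarrow> 'v"
    and C :: "nat \<Rightarrow> (nat \<Rightarrow> nat \<Rightarrow> 'v) set"
  assumes "star_vector_space sc st"
    and "matrix_ordering sc st C"
    and "n \<ge> 1"
  shows "Mn_of n (J1 sc C) = Jn sc C n"
proof -
  have vs: "vector_space sc"
    using assms(1) by (simp add: star_vector_space_def)
  have C_subset_Mn: "C k \<subseteq> Mn k" if "k \<ge> 1" for k
    using assms(2) that by (auto simp: matrix_ordering_def hermitian_mats_def)
  have conj_mult_C: "conj_mult sc k m \<alpha> X \<in> C m" if "k \<ge> 1" "m \<ge> 1" "X \<in> C k" for k m \<alpha> X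
    using assms(2) that by (simp add: matrix_ordering_def)
  show ?thesis
    using Mn_of_J1_subset_Jn[OF vs C_subset_Mn conj_mult_C assms(3)]
      Jn_subset_Mn_of_J1[OF vs C_subset_Mn conj_mult_C assms(3)]
    by (rule subset_antisym)
qed

end
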